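(* Let $n\ge2$, $d\ge1$, $\tau>0$, $\sigma>0$, with $\mu^\star_1,\mu^\star_2\stackrel{\mathrm{i.i.d.}}{\sim}\mathcal N(0,\tau^2I_d)$, $\xi_1,\dots,\xi_n\stackrel{\mathrm{i.i.d.}}{\sim}\mathcal N(0,\sigma^2I_d)$ independent, fixed labels $z^\star_i\in\{1,2\}$ with both classes $S^\star_\ell=\{i:z^\star_i=\ell\}$ nonempty, $x_i=\mu^\star_{z^\star_i}+\xi_i$, and a fixed partition $\{C_1,C_2\}$ of $[n]$ into nonempty sets. Fix $i\in C_j\cap S^\star_\ell$ and let $\alpha=2\tau^2(1-R^\ell_j)^2+(1-1/|C_j|)\sigma^2$. Then, over all feasible values of $R^\ell_j$, $\alpha$ is maximized at the smallest feasible purity $R^\ell_j=1/|C_j|$, in which case $\|x_i-\widehat\mu_j\|^2\sim A\,\chi^2_d$ with $$A=\Bigl(1-\tfrac1{|C_j|}\Bigr)\sigma^2+\frac{2\tau^2(|C_j|-1)^2}{|C_j|^2},$$ and for all feasible $R^\ell_j$, $\alpha\le A$.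
   Context: $R^\ell_j=|C_j\cap S^\star_\ell|/|C_j|$; $\widehat\mu_j=|C_j|^{-1}\sum_{k\in C_j}x_k$. "$Y\sim a\chi^2_d$" means $Y/a$ is chi-squared with $d$ degrees of freedom. *)

theory Defs
  imports "HOL-Probability.Probability"
begin

definition chi2_density :: "nat \<Rightarrow> real \<Rightarrow> real" where
  "chi2_density d y =
     (if y > 0 then y powr (real d / 2 - 1) * exp (- y / 2) / (2 powr (real d / 2) * Gamma (real d / 2))
      else 0)"

definition scaled_chi2 :: "'a measure \<Rightarrow> ('a \<Rightarrow> real) \<Rightarrow> real \<Rightarrow> nat \<Rightarrow> bool" where
  "scaled_chi2 M Y a d \<longleftrightarrow> Y \<in> borel_measurable M \<and>
     distr M borel Y = distr (density lborel (\<lambda>y. ennreal (chi2_density d y))) borel (\<lambda>y. a * y)"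

end

theory Submission
  imports Defs
begin

(*
  When i is the only point of its true class l inside C_j (purity 1/c with c = |C_j|), the residual
  x_i - \<mu>hat_j equals (1 - 1/c) (\<mu>*_l - \<mu>*_l') + (1 - 1/c) \<xi>_i - (1/c) \<Sum>_{k \<in> C_j - {i}} \<xi>_k,
  a fixed linear combination of independent centred Gaussian vectors. Each coordinate is therefore
  N(0, A), and distinct coordinates are built from disjoint families of independent variables, so
  ||x_i - \<mu>hat_j||^2 / A is a sum of d independent squared standard normals. That such a sum has
  the \<chi>^2_d density follows from the \<chi>^2_1 density of a squared standard normal (change of
  variables on the even Gaussian density) and the closure of \<chi>^2 densities under convolution.
  The claims about \<alpha> only use that (1 - r)^2 decreases on [1/c, 1].
*)

lemma chi2_density_nonneg: "0 < d \<Longrightarrow> 0 \<le> chi2_density d y"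
  by (auto simp: chi2_density_def intro!: divide_nonneg_nonneg mult_nonneg_nonneg)

lemma borel_measurable_chi2_density [measurable]: "chi2_density d \<in> borel_measurable borel"
  unfolding chi2_density_def by measurable

lemma nn_integral_chi2_density:
  assumes "d > 0"
  shows "(\<integral>\<^sup>+y. ennreal (chi2_density d y) \<partial>lborel) = 1"
proof -
  define k where "k = real d / 2"
  have k: "k > 0" using assms by (simp add: k_def)
  have G: "Gamma k > 0" using k by simp
  have scaled: "2 * chi2_density d (2 * x) = indicator {0..} x * x powr (k - 1) / exp x / Gamma k"
    for x :: real
  proof (cases "x > 0")
    case True
    have "(2 * x) powr (k - 1) = 2 powr k / 2 * x powr (k - 1)"
      using True by (simp add: powr_mult powr_diff)
    then show ?thesis using True G
      by (simp add: chi2_density_def k_def[symmetric] indicator_def exp_minus field_simps)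
  qed (auto simp: chi2_density_def indicator_def)
  have "(\<integral>\<^sup>+y. ennreal (chi2_density d y) \<partial>lborel)
      = ennreal \<bar>2\<bar> * (\<integral>\<^sup>+x. ennreal (chi2_density d (0 + 2 * x)) \<partial>lborel)"
    by (rule nn_integral_real_affine) auto
  also have "\<dots> = (\<integral>\<^sup>+x. ennreal (1 / Gamma k) * ennreal (indicator {0..} x * x powr (k - 1) / exp x) \<partial>lborel)"
  proof (subst nn_integral_cmult[symmetric], simp, rule nn_integral_cong)
    fix x :: real
    have "ennreal \<bar>2\<bar> * ennreal (chi2_density d (0 + 2 * x)) = ennreal (2 * chi2_density d (2 * x))"
      using assms by (simp add: chi2_density_nonneg ennreal_mult)
    then show "ennreal \<bar>2\<bar> * ennreal (chi2_density d (0 + 2 * x))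
        = ennreal (1 / Gamma k) * ennreal (indicator {0..} x * x powr (k - 1) / exp x)"
      unfolding scaled using G by (simp add: ennreal_mult[symmetric])
  qed
  also have "\<dots> = ennreal (1 / Gamma k) * Gamma k"
    by (subst nn_integral_cmult) (auto simp: Gamma_conv_nn_integral_real[OF k])
  also have "\<dots> = 1"
    using G by (simp flip: ennreal_mult)
  finally show ?thesis .
qed

lemma prob_space_chi2_density:
  "d > 0 \<Longrightarrow> prob_space (density lborel (\<lambda>y. ennreal (chi2_density d y)))"
  by (rule prob_spaceI) (simp add: emeasure_density nn_integral_chi2_density)

lemma chi2_density_product_rescaled:
  fixes x t :: real
  assumes a: "a > 0" and b: "b > 0" and x: "x > 0"
  defines "K \<equiv> (2 powr (real (a + b) / 2) * Gamma (real (a + b) / 2)) /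
      ((2 powr (real a / 2) * Gamma (real a / 2)) * (2 powr (real b / 2) * Gamma (real b / 2)))"
  shows "x * (chi2_density a (x - x * t) * chi2_density b (x * t)) = chi2_density (a + b) x *
    (K * (if 0 < t \<and> t < 1 then (1 - t) powr (real a / 2 - 1) * t powr (real b / 2 - 1) else 0))"
proof (cases "0 < t \<and> t < 1")
  case True
  define p where "p = real a / 2"
  define q where "q = real b / 2"
  have p: "p > 0" and q: "q > 0" using a b by (auto simp: p_def q_def)
  have ab: "real (a + b) / 2 = p + q" by (simp add: p_def q_def add_divide_distrib)
  have Gamma_pos: "Gamma p > 0" "Gamma q > 0" "Gamma (p + q) > 0"
    using p q by auto
  have powr_split: "(x - x * t) powr (p - 1) = x powr (p - 1) * (1 - t) powr (p - 1)"
      "(x * t) powr (q - 1) = x powr (q - 1) * t powr (q - 1)"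
      "x * (x powr (p - 1) * x powr (q - 1)) = x powr (p + q - 1)"
    using True x by (auto simp: powr_add[symmetric] powr_mult_base algebra_simps
        simp flip: powr_mult)
  have exp_split: "exp (- (x - x * t) / 2) * exp (- (x * t) / 2) = exp (- x / 2)"
    by (simp add: exp_add[symmetric] field_simps)
  have "x * (chi2_density a (x - x * t) * chi2_density b (x * t)) =
        x * ((x - x * t) powr (p - 1) * exp (- (x - x * t) / 2) / (2 powr p * Gamma p)) *
            ((x * t) powr (q - 1) * exp (- (x * t) / 2) / (2 powr q * Gamma q))"
    using True x by (simp add: chi2_density_def p_def q_def)
  also have "\<dots> = (x * (x powr (p - 1) * x powr (q - 1))) * (exp (- (x - x * t) / 2) * exp (- (x * t) / 2))
       * ((1 - t) powr (p - 1) * t powr (q - 1)) / ((2 powr p * Gamma p) * (2 powr q * Gamma q))"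
    unfolding powr_split(1,2) by (simp add: field_simps)
  also have "\<dots> = (x powr (p + q - 1) * exp (- x / 2) / (2 powr (p + q) * Gamma (p + q)))
    * ((2 powr (p + q) * Gamma (p + q)) / ((2 powr p * Gamma p) * (2 powr q * Gamma q))
       * ((1 - t) powr (p - 1) * t powr (q - 1)))"
    unfolding powr_split(3) exp_split using Gamma_pos by (simp add: field_simps)
  finally show ?thesis using True x
    unfolding chi2_density_def K_def ab p_def[symmetric] q_def[symmetric] by simp
next
  case False
  then have "x * t \<le> 0 \<or> x - x * t \<le> 0"
    using x by (auto simp: not_less mult_le_cancel_left1 mult_nonneg_nonpos)
  then show ?thesis using False by (auto simp: chi2_density_def)
qed

text \<open>The constant is a Beta integral; it never has to be evaluated, because it is forced to be 1
  once both sides are known to be probability densities.\<close>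
lemma chi2_density_convolution_proportional:
  assumes a: "a > 0" and b: "b > 0"
  obtains K where "\<And>x. (\<integral>\<^sup>+y. ennreal (chi2_density a (x - y)) * ennreal (chi2_density b y) \<partial>lborel)
              = K * ennreal (chi2_density (a + b) x)"
proof
  define K where "K = (2 powr (real (a + b) / 2) * Gamma (real (a + b) / 2)) /
      ((2 powr (real a / 2) * Gamma (real a / 2)) * (2 powr (real b / 2) * Gamma (real b / 2)))"
  define h where "h t = K * (if 0 < t \<and> t < 1 then (1 - t) powr (real a / 2 - 1) * t powr (real b / 2 - 1) else 0)"
    for t :: real
  have h: "h t \<ge> 0" for t
    using a b by (simp add: h_def K_def)
  have [measurable]: "h \<in> borel_measurable borel"
    unfolding h_def by measurable
  fix x :: real
  show "(\<integral>\<^sup>+y. ennreal (chi2_density a (x - y)) * ennreal (chi2_density b y) \<partial>lborel)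
      = (\<integral>\<^sup>+t. ennreal (h t) \<partial>lborel) * ennreal (chi2_density (a + b) x)"
  proof (cases "x > 0")
    case True
    have "(\<integral>\<^sup>+y. ennreal (chi2_density a (x - y)) * ennreal (chi2_density b y) \<partial>lborel)
        = ennreal \<bar>x\<bar> * (\<integral>\<^sup>+t. ennreal (chi2_density a (x - (0 + x * t)) * chi2_density b (0 + x * t)) \<partial>lborel)"
      using True a b by (subst nn_integral_real_affine[where c=x and t=0])
        (auto simp: chi2_density_nonneg ennreal_mult)
    also have "\<dots> = (\<integral>\<^sup>+t. ennreal (chi2_density (a + b) x) * ennreal (h t) \<partial>lborel)"
      using True a b h
      by (subst nn_integral_cmult[symmetric])
        (auto intro!: nn_integral_cong simp: chi2_density_nonneg h_def K_def
          chi2_density_product_rescaled simp flip: ennreal_mult)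
    also have "\<dots> = ennreal (chi2_density (a + b) x) * (\<integral>\<^sup>+t. ennreal (h t) \<partial>lborel)"
      by (rule nn_integral_cmult) simp
    finally show ?thesis by (simp add: mult.commute)
  next
    case False
    then have vanish: "ennreal (chi2_density a (x - y)) * ennreal (chi2_density b y) = 0" for y
      by (cases "y > 0") (auto simp: chi2_density_def)
    show ?thesis using False by (simp only: vanish) (simp add: chi2_density_def)
  qed
qed

lemma (in prob_space) distributed_chi2_add:
  assumes a: "a > 0" and b: "b > 0"
    and indep: "indep_var borel X borel Y"
    and X: "distributed M lborel X (\<lambda>y. ennreal (chi2_density a y))"
    and Y: "distributed M lborel Y (\<lambda>y. ennreal (chi2_density b y))"
  shows "distributed M lborel (\<lambda>\<omega>. X \<omega> + Y \<omega>) (\<lambda>y. ennreal (chi2_density (a + b) y))"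
proof -
  obtain K where K: "\<And>x. (\<integral>\<^sup>+y. ennreal (chi2_density a (x - y)) * ennreal (chi2_density b y) \<partial>lborel)
              = K * ennreal (chi2_density (a + b) x)"
    using chi2_density_convolution_proportional[OF a b] by blast
  have D: "distributed M lborel (\<lambda>\<omega>. X \<omega> + Y \<omega>) (\<lambda>x. K * ennreal (chi2_density (a + b) x))"
    using distributed_convolution[OF indep X Y] unfolding K .
  have "K = emeasure (density lborel (\<lambda>x. K * ennreal (chi2_density (a + b) x))) UNIV"
    using D a b by (simp add: emeasure_density nn_integral_cmult nn_integral_chi2_density
        distributed_borel_measurable)
  also have "\<dots> = emeasure (distr M lborel (\<lambda>\<omega>. X \<omega> + Y \<omega>)) UNIV"
    using distributed_distr_eq_density[OF D] by simp
  also have "\<dots> = 1"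
    using distributed_measurable[OF D] by (simp add: emeasure_distr emeasure_space_1)
  finally show ?thesis using D by simp
qed

lemma chi2_density_one_square:
  fixes t :: real
  assumes "t > 0"
  shows "chi2_density 1 (t\<^sup>2) * t = std_normal_density t"
proof -
  have "(t\<^sup>2) powr (real 1 / 2 - 1) = inverse t"
    using assms by (simp add: powr_minus powr_half_sqrt flip: powr_powr)
  moreover have "sqrt (2 * pi) = sqrt 2 * sqrt pi"
    by (simp add: real_sqrt_mult)
  ultimately show ?thesis using assms
    by (simp add: chi2_density_def normal_density_def Gamma_one_half_real powr_half_sqrt field_simps)
qed

lemma nn_integral_even_symmetric_interval:
  fixes u :: "real \<Rightarrow> real"
  assumes [measurable]: "u \<in> borel_measurable borel"
    and nonneg: "\<And>t. u t \<ge> 0" and even: "\<And>t. u (- t) = u t" and "s \<ge> 0"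
  shows "(\<integral>\<^sup>+t. ennreal (u t * indicator {-s..s} t) \<partial>lborel)
       = (\<integral>\<^sup>+t. ennreal (2 * u t * indicator {0<..s} t) \<partial>lborel)"
proof -
  have split: "ennreal (u t * indicator {-s..s} t) = ennreal (u t * indicator {-s..<0} t)
      + ennreal (u t * indicator {0<..s} t) + ennreal (u t * indicator {0} t)" for t
    using \<open>s \<ge> 0\<close> nonneg[of t] by (auto simp: indicator_def)
  have "(\<integral>\<^sup>+t. ennreal (u t * indicator {-s..s} t) \<partial>lborel) =
      (\<integral>\<^sup>+t. ennreal (u t * indicator {-s..<0} t) \<partial>lborel) + (\<integral>\<^sup>+t. ennreal (u t * indicator {0<..s} t) \<partial>lborel)
      + (\<integral>\<^sup>+t. ennreal (u t * indicator {0} t) \<partial>lborel)"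
    unfolding split by (subst nn_integral_add; simp)+
  also have "(\<integral>\<^sup>+t. ennreal (u t * indicator {0} t) \<partial>lborel) = 0"
    by (rule nn_integral_zero', rule AE_I[where N="{0}"]) (auto simp: indicator_def)
  also have "(\<integral>\<^sup>+t. ennreal (u t * indicator {-s..<0} t) \<partial>lborel) =
       ennreal \<bar>-1\<bar> * (\<integral>\<^sup>+t. ennreal (u (0 + -1 * t) * indicator {-s..<0} (0 + -1 * t)) \<partial>lborel)"
    by (intro nn_integral_real_affine) auto
  also have "\<dots> = (\<integral>\<^sup>+t. ennreal (u t * indicator {0<..s} t) \<partial>lborel)"
    using even by (auto intro!: nn_integral_cong simp: indicator_def)
  also have "(\<integral>\<^sup>+t. ennreal (u t * indicator {0<..s} t) \<partial>lborel)
      + (\<integral>\<^sup>+t. ennreal (u t * indicator {0<..s} t) \<partial>lborel) + 0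
      = (\<integral>\<^sup>+t. ennreal (u t * indicator {0<..s} t) + ennreal (u t * indicator {0<..s} t) \<partial>lborel)"
    by (subst nn_integral_add) auto
  also have "\<dots> = (\<integral>\<^sup>+t. ennreal (2 * u t * indicator {0<..s} t) \<partial>lborel)"
    using nonneg by (intro nn_integral_cong) (auto simp: indicator_def simp flip: ennreal_plus)
  finally show ?thesis .
qed

lemma nn_integral_std_normal_square_le:
  fixes x :: real
  shows "(\<integral>\<^sup>+t. ennreal (std_normal_density t) * indicator {t. t\<^sup>2 \<le> x} t \<partial>lborel)
       = (\<integral>\<^sup>+y. ennreal (chi2_density 1 y) * indicator {..x} y \<partial>lborel)"
proof (cases "x < 0")
  case True
  then have "{t::real. t\<^sup>2 \<le> x} = {}"
    by (auto simp: not_le) (meson le_less_trans not_less zero_le_power2)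
  moreover have vanish: "ennreal (chi2_density 1 y) * indicator {..x} y = 0" for y
    using True by (auto simp: indicator_def chi2_density_def)
  ultimately show ?thesis by (simp only: vanish) simp
next
  case False
  define s where "s = sqrt x"
  have s: "s \<ge> 0" "s\<^sup>2 = x" using False by (auto simp: s_def)
  have "t\<^sup>2 \<le> x \<longleftrightarrow> - s \<le> t \<and> t \<le> s" for t :: real
    unfolding s_def by (metis abs_le_iff minus_le_iff real_sqrt_abs real_sqrt_le_iff)
  then have "(\<integral>\<^sup>+t. ennreal (std_normal_density t) * indicator {t. t\<^sup>2 \<le> x} t \<partial>lborel)
      = (\<integral>\<^sup>+t. ennreal (std_normal_density t * indicator {-s..s} t) \<partial>lborel)"
    by (intro nn_integral_cong) (auto simp: indicator_def)
  also have "\<dots> = (\<integral>\<^sup>+t. ennreal (2 * std_normal_density t * indicator {0<..s} t) \<partial>lborel)"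
    by (rule nn_integral_even_symmetric_interval) (auto simp: s normal_density_def)
  also have "\<dots> = (\<integral>\<^sup>+t. ennreal (chi2_density 1 (t\<^sup>2) * (2 * t) * indicator {0..s} t) \<partial>lborel)"
  proof (intro nn_integral_cong)
    fix t :: real
    show "ennreal (2 * std_normal_density t * indicator {0<..s} t)
        = ennreal (chi2_density 1 (t\<^sup>2) * (2 * t) * indicator {0..s} t)"
      using chi2_density_one_square[of t] by (cases "t = 0") (auto simp: indicator_def mult.left_commute)
  qed
  also have "\<dots> = (\<integral>\<^sup>+y. ennreal (chi2_density 1 y * indicator {0\<^sup>2..s\<^sup>2} y) \<partial>lborel)"
    by (rule nn_integral_substitution[where g="\<lambda>t. t\<^sup>2" and g'="\<lambda>t. 2 * t", symmetric])
      (auto simp: s set_borel_measurable_def intro!: derivative_eq_intros continuous_intros)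
  also have "\<dots> = (\<integral>\<^sup>+y. ennreal (chi2_density 1 y) * indicator {..x} y \<partial>lborel)"
    using s by (intro nn_integral_cong) (auto simp: indicator_def chi2_density_def)
  finally show ?thesis .
qed

lemma (in prob_space) distributed_chi2_square_std_normal:
  assumes X: "distributed M lborel X std_normal_density"
  shows "distributed M lborel (\<lambda>\<omega>. (X \<omega>)\<^sup>2) (\<lambda>y. ennreal (chi2_density 1 y))"
proof -
  have [measurable]: "X \<in> measurable M borel"
    using distributed_measurable[OF X] by simp
  let ?M1 = "distr M lborel (\<lambda>\<omega>. (X \<omega>)\<^sup>2)"
  let ?M2 = "density lborel (\<lambda>y. ennreal (chi2_density 1 y))"
  have "finite_borel_measure ?M1"
    unfolding finite_borel_measure_def finite_borel_measure_axioms_def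
    by (auto intro!: finite_measure_distr)
  moreover have "finite_borel_measure ?M2"
    using prob_space.finite_measure[OF prob_space_chi2_density[of 1]]
    unfolding finite_borel_measure_def finite_borel_measure_axioms_def by simp
  moreover have "emeasure ?M1 {..x} = emeasure ?M2 {..x}" for x
  proof -
    have "emeasure ?M1 {..x} = emeasure (distr M lborel X) {t. t\<^sup>2 \<le> x}"
      by (simp add: emeasure_distr vimage_def Int_def conj_commute)
    also have "\<dots> = (\<integral>\<^sup>+t. ennreal (std_normal_density t) * indicator {t. t\<^sup>2 \<le> x} t \<partial>lborel)"
      unfolding distributed_distr_eq_density[OF X] by (simp add: emeasure_density)
    finally show ?thesis
      by (simp add: emeasure_density nn_integral_std_normal_square_le)
  qed
  ultimately have "?M1 = ?M2"
    by (intro cdf_unique') (auto simp: cdf_def measure_def)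
  then show ?thesis
    unfolding distributed_def by auto
qed

lemma (in prob_space) distributed_chi2_sum_squares:
  assumes "finite I" "I \<noteq> {}" "indep_vars (\<lambda>_. borel) Z I"
    and "\<And>i. i \<in> I \<Longrightarrow> distributed M lborel (Z i) std_normal_density"
  shows "distributed M lborel (\<lambda>\<omega>. \<Sum>i\<in>I. (Z i \<omega>)\<^sup>2) (\<lambda>y. ennreal (chi2_density (card I) y))"
  using assms
proof (induction I rule: finite_ne_induct)
  case (singleton i)
  then show ?case using distributed_chi2_square_std_normal[of "Z i"] by simp
next
  case (insert i I)
  have "indep_vars (\<lambda>_. borel) (\<lambda>i \<omega>. (Z i \<omega>)\<^sup>2) (insert i I)"
    by (rule indep_vars_compose2[OF insert.prems(1)]) auto
  then have indep: "indep_var borel (\<lambda>\<omega>. (Z i \<omega>)\<^sup>2) borel (\<lambda>\<omega>. \<Sum>j\<in>I. (Z j \<omega>)\<^sup>2)"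
    using indep_vars_sum[OF insert.hyps(1,3)] by blast
  have IH: "distributed M lborel (\<lambda>\<omega>. \<Sum>j\<in>I. (Z j \<omega>)\<^sup>2) (\<lambda>y. ennreal (chi2_density (card I) y))"
    using insert.IH insert.prems by (auto intro: indep_vars_subset)
  have square: "distributed M lborel (\<lambda>\<omega>. (Z i \<omega>)\<^sup>2) (\<lambda>y. ennreal (chi2_density 1 y))"
    using distributed_chi2_square_std_normal insert.prems(2) by blast
  have "card I > 0"
    using insert.hyps by auto
  with indep IH square have "distributed M lborel (\<lambda>\<omega>. (Z i \<omega>)\<^sup>2 + (\<Sum>j\<in>I. (Z j \<omega>)\<^sup>2))
      (\<lambda>y. ennreal (chi2_density (1 + card I) y))"
    by (intro distributed_chi2_add) simp_all
  then show ?case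
    using insert.hyps by simp
qed

lemma (in prob_space) scaled_chi2_norm_sq:
  fixes Y :: "'a \<Rightarrow> real ^ 'd"
  assumes indep: "indep_vars (\<lambda>_. borel) (\<lambda>c \<omega>. Y \<omega> $ c) UNIV"
    and normal: "\<And>c. distributed M lborel (\<lambda>\<omega>. Y \<omega> $ c) (normal_density 0 s)"
    and "s > 0"
  shows "scaled_chi2 M (\<lambda>\<omega>. (norm (Y \<omega>))\<^sup>2) (s\<^sup>2) CARD('d)"
proof -
  define Z where "Z c \<omega> = Y \<omega> $ c / s" for c \<omega>
  have "indep_vars (\<lambda>_. borel) Z UNIV"
    unfolding Z_def by (rule indep_vars_compose2[OF indep]) simp
  moreover have "distributed M lborel (Z c) std_normal_density" for c
    using normal normal_standard_normal_convert[OF \<open>s > 0\<close>] by (simp add: Z_def[abs_def])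
  ultimately have chi2: "distributed M lborel (\<lambda>\<omega>. \<Sum>c\<in>UNIV. (Z c \<omega>)\<^sup>2)
      (\<lambda>y. ennreal (chi2_density CARD('d) y))"
    by (intro distributed_chi2_sum_squares) auto
  have [measurable]: "(\<lambda>\<omega>. \<Sum>c\<in>UNIV. (Z c \<omega>)\<^sup>2) \<in> borel_measurable M"
    using distributed_measurable[OF chi2] by simp
  have norm_eq: "(norm (Y \<omega>))\<^sup>2 = s\<^sup>2 * (\<Sum>c\<in>UNIV. (Z c \<omega>)\<^sup>2)" for \<omega>
    using \<open>s > 0\<close> by (simp add: norm_vec_def L2_set_def sum_nonneg Z_def sum_distrib_left
        power_divide)
  have "distr M borel (\<lambda>\<omega>. s\<^sup>2 * (\<Sum>c\<in>UNIV. (Z c \<omega>)\<^sup>2))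
      = distr (distr M borel (\<lambda>\<omega>. \<Sum>c\<in>UNIV. (Z c \<omega>)\<^sup>2)) borel (\<lambda>y. s\<^sup>2 * y)"
    by (subst distr_distr) (auto simp: comp_def)
  also have "distr M borel (\<lambda>\<omega>. \<Sum>c\<in>UNIV. (Z c \<omega>)\<^sup>2) = density lborel (\<lambda>y. ennreal (chi2_density CARD('d) y))"
    using distributed_distr_eq_density[OF chi2] by (simp cong: distr_cong)
  finally show ?thesis
    unfolding scaled_chi2_def norm_eq by simp
qed

lemma (in prob_space) scaled_chi2_zero:
  assumes "d > 0"
  shows "scaled_chi2 M (\<lambda>_. 0) 0 d"
proof -
  have "distr (density lborel (\<lambda>y. ennreal (chi2_density d y))) borel (\<lambda>_. 0) = return borel (0::real)"
    by (rule prob_space.distr_const[OF prob_space_chi2_density[OF assms]]) simp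
  then show ?thesis
    by (simp add: scaled_chi2_def)
qed

lemma sum_Times_singleton: "(\<Sum>p\<in>A \<times> {c}. f p) = (\<Sum>a\<in>A. f (a, c))"
proof -
  have "A \<times> {c} = (\<lambda>a. (a, c)) ` A"
    by auto
  then show ?thesis
    by (simp add: sum.reindex inj_on_def)
qed

lemma (in prob_space) scaled_chi2_norm_sq_lincomb:
  fixes X :: "'i \<Rightarrow> 'a \<Rightarrow> real ^ 'd"
  assumes V: "finite V" "V \<noteq> {}"
    and indep: "indep_vars (\<lambda>_. borel) (\<lambda>(v, c) \<omega>. X v \<omega> $ c) (V \<times> UNIV)"
    and normal: "\<And>v c. v \<in> V \<Longrightarrow> distributed M lborel (\<lambda>\<omega>. X v \<omega> $ c) (normal_density 0 (s v))"
    and s_pos: "\<And>v. v \<in> V \<Longrightarrow> s v > 0" and a_nz: "\<And>v. v \<in> V \<Longrightarrow> a v \<noteq> 0"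
  shows "scaled_chi2 M (\<lambda>\<omega>. (norm (\<Sum>v\<in>V. a v *\<^sub>R X v \<omega>))\<^sup>2) (\<Sum>v\<in>V. (a v * s v)\<^sup>2) CARD('d)"
proof -
  define W where "W = (\<lambda>(v, c) \<omega>. X v \<omega> $ c)"
  define f where "f c g = (\<Sum>p\<in>V \<times> {c}. a (fst p) * g p)" for c :: 'd and g :: "'i \<times> 'd \<Rightarrow> real"
  define S where "S = (\<Sum>v\<in>V. (a v * s v)\<^sup>2)"
  have "(a v * s v)\<^sup>2 > 0" if "v \<in> V" for v
    using s_pos[OF that] a_nz[OF that] by simp
  then have S: "S > 0"
    using V unfolding S_def by (intro sum_pos) auto
  have coord: "(\<Sum>v\<in>V. a v *\<^sub>R X v \<omega>) $ c = f c (restrict (\<lambda>p. W p \<omega>) (V \<times> {c}))" for \<omega> c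
    using V by (simp add: f_def W_def sum_Times_singleton)
  have "indep_vars (\<lambda>c. PiM (V \<times> {c}) (\<lambda>_. borel)) (\<lambda>c \<omega>. restrict (\<lambda>p. W p \<omega>) (V \<times> {c})) UNIV"
    using indep unfolding W_def[symmetric]
    by (rule indep_vars_restrict) (auto simp: disjoint_family_on_def)
  then have "indep_vars (\<lambda>_. borel) (\<lambda>c \<omega>. f c (restrict (\<lambda>p. W p \<omega>) (V \<times> {c}))) UNIV"
    by (rule indep_vars_compose2) (simp add: f_def)
  moreover have "distributed M lborel (\<lambda>\<omega>. f c (restrict (\<lambda>p. W p \<omega>) (V \<times> {c}))) (normal_density 0 (sqrt S))"
    for c
  proof -
    have "distributed M lborel (\<lambda>\<omega>. \<Sum>p\<in>V \<times> {c}. a (fst p) * W p \<omega>)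
        (normal_density (\<Sum>p\<in>V \<times> {c}. 0) (sqrt (\<Sum>p\<in>V \<times> {c}. (\<bar>a (fst p)\<bar> * s (fst p))\<^sup>2)))"
    proof (rule sum_indep_normal)
      show "indep_vars (\<lambda>_. borel) (\<lambda>p \<omega>. a (fst p) * W p \<omega>) (V \<times> {c})"
        using indep_vars_subset[OF indep, of "V \<times> {c}"] unfolding W_def[symmetric]
        by (rule indep_vars_compose2[where X=W]) auto
      fix p assume "p \<in> V \<times> {c}"
      then obtain v where p: "p = (v, c)" "v \<in> V" by auto
      show "0 < \<bar>a (fst p)\<bar> * s (fst p)"
        using p s_pos a_nz by simp
      show "distributed M lborel (\<lambda>\<omega>. a (fst p) * W p \<omega>) (normal_density 0 (\<bar>a (fst p)\<bar> * s (fst p)))"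
        using normal_density_affine[OF normal[OF p(2), of c], of "a v" 0] p s_pos a_nz by (simp add: W_def)
    qed (use V in auto)
    then show ?thesis
      using V by (simp add: f_def sum_Times_singleton S_def power_mult_distrib)
  qed
  ultimately have "scaled_chi2 M (\<lambda>\<omega>. (norm (\<Sum>v\<in>V. a v *\<^sub>R X v \<omega>))\<^sup>2) ((sqrt S)\<^sup>2) CARD('d)"
    using S by (intro scaled_chi2_norm_sq) (simp_all only: coord real_sqrt_gt_zero)
  then show ?thesis
    using S by (simp add: S_def)
qed

lemma residual_of_lone_point:
  fixes mu xi :: "nat \<Rightarrow> 'v::real_vector" and z :: "nat \<Rightarrow> nat"
  assumes "finite C" "i \<in> C" and others: "\<And>k. k \<in> C - {i} \<Longrightarrow> z k = l'"
  defines "c \<equiv> real (card C)"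
  shows "mu (z i) + xi i - (1 / c) *\<^sub>R (\<Sum>k\<in>C. mu (z k) + xi k)
       = (1 - 1 / c) *\<^sub>R (mu (z i) - mu l') + (1 - 1 / c) *\<^sub>R xi i - (1 / c) *\<^sub>R (\<Sum>k\<in>C - {i}. xi k)"
proof -
  have "card C > 0"
    using assms(1,2) card_gt_0_iff by blast
  then have c: "c \<ge> 1"
    by (simp add: c_def)
  have "(\<Sum>k\<in>C. mu (z k) + xi k) = mu (z i) + xi i + (\<Sum>k\<in>C - {i}. mu l' + xi k)"
    using assms(1,2) others by (simp add: sum.remove)
  also have "\<dots> = mu (z i) + xi i + (c - 1) *\<^sub>R mu l' + (\<Sum>k\<in>C - {i}. xi k)"
    using assms(1,2) c by (simp add: sum.distrib c_def of_nat_diff card_Diff_singleton sum_constant_scaleR)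
  also have "(1 / c) *\<^sub>R \<dots> = (1 / c) *\<^sub>R (mu (z i) + xi i) + (1 - 1 / c) *\<^sub>R mu l' + (1 / c) *\<^sub>R (\<Sum>k\<in>C - {i}. xi k)"
    using c by (simp add: scaleR_add_right diff_divide_distrib)
  finally show ?thesis
    by (simp add: scaleR_diff_left scaleR_diff_right scaleR_add_right)
qed
lemma (in prob_space) scaled_chi2_residual_of_lone_point:
  fixes mu xi :: "nat \<Rightarrow> 'a \<Rightarrow> real ^ 'd" and z :: "nat \<Rightarrow> nat" and tau sigma :: real
  assumes "tau > 0" "sigma > 0"
    and mu_gauss: "\<And>m c. m \<in> {1,2} \<Longrightarrow> distributed M lborel (\<lambda>\<omega>. mu m \<omega> $ c) (normal_density 0 tau)"
    and xi_gauss: "\<And>k c. k \<in> {1..n} \<Longrightarrow> distributed M lborel (\<lambda>\<omega>. xi k \<omega> $ c) (normal_density 0 sigma)"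
    and indep: "indep_vars (\<lambda>_. borel)
                  (\<lambda>(v, c) \<omega>. (case v of Inl m \<Rightarrow> mu m \<omega> | Inr k \<Rightarrow> xi k \<omega>) $ c)
                  ((Inl ` {1,2} \<union> Inr ` {1..n}) \<times> (UNIV :: 'd set))"
    and C: "C \<subseteq> {1..n}" "i \<in> C" "card C \<ge> 2"
    and labels: "l \<in> {1,2}" "l' \<in> {1,2}" "l \<noteq> l'" "z i = l" "\<And>k. k \<in> C - {i} \<Longrightarrow> z k = l'"
  defines "c \<equiv> real (card C)"
  shows "scaled_chi2 M
     (\<lambda>\<omega>. (norm (mu (z i) \<omega> + xi i \<omega> - (1 / c) *\<^sub>R (\<Sum>k\<in>C. mu (z k) \<omega> + xi k \<omega>)))\<^sup>2)
     ((1 - 1 / c) * sigma\<^sup>2 + 2 * tau\<^sup>2 * (c - 1)\<^sup>2 / c\<^sup>2) CARD('d)"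
proof -
  define X where "X v \<omega> = (case v of Inl m \<Rightarrow> mu m \<omega> | Inr k \<Rightarrow> xi k \<omega>)" for v \<omega>
  define V where "V = {Inl l, Inl l', Inr i} \<union> Inr ` (C - {i})"
  define a where "a v = (case v of Inl m \<Rightarrow> if m = l then 1 - 1 / c else 1 / c - 1
      | Inr k \<Rightarrow> if k = i then 1 - 1 / c else - (1 / c))" for v
  define s where "s v = (case v of Inl _ \<Rightarrow> tau | Inr _ \<Rightarrow> sigma)" for v :: "nat + nat"
  have "finite C"
    using C(1) finite_subset by blast
  have c: "c \<ge> 2"
    using C(3) by (simp add: c_def)
  have sum_V: "(\<Sum>v\<in>V. f v) = f (Inl l) + f (Inl l') + f (Inr i) + (\<Sum>k\<in>C - {i}. f (Inr k))"
    for f :: "nat + nat \<Rightarrow> 'b::comm_monoid_add"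
    using \<open>finite C\<close> labels(3) by (simp add: V_def sum.reindex image_iff add.assoc)
  have flip_sign: "(1 / c - 1) *\<^sub>R y = - ((1 - 1 / c) *\<^sub>R y)" for y :: "real ^ 'd"
    by (metis minus_diff_eq scaleR_minus_left)
  have residual: "mu (z i) \<omega> + xi i \<omega> - (1 / c) *\<^sub>R (\<Sum>k\<in>C. mu (z k) \<omega> + xi k \<omega>)
      = (\<Sum>v\<in>V. a v *\<^sub>R X v \<omega>)" for \<omega>
    using residual_of_lone_point[of C i z l' "\<lambda>m. mu m \<omega>" "\<lambda>k. xi k \<omega>", folded c_def]
      \<open>finite C\<close> C(2) labels
    unfolding sum_V by (simp add: a_def X_def flip_sign scaleR_sum_right scaleR_diff_right sum_negf)
  have variance: "(\<Sum>v\<in>V. (a v * s v)\<^sup>2) = (1 - 1 / c) * sigma\<^sup>2 + 2 * tau\<^sup>2 * (c - 1)\<^sup>2 / c\<^sup>2"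
  proof -
    have card: "real (card (C - {i})) = c - 1"
      using \<open>finite C\<close> C(2,3) by (simp add: c_def of_nat_diff)
    have "(\<Sum>v\<in>V. (a v * s v)\<^sup>2)
        = 2 * tau\<^sup>2 * (1 - 1 / c)\<^sup>2 + sigma\<^sup>2 * (1 - 1 / c)\<^sup>2 + (c - 1) * (sigma / c)\<^sup>2"
      unfolding sum_V using labels(3) by (simp add: a_def s_def card power_mult_distrib power_divide power2_commute)
    also have "\<dots> = (1 - 1 / c) * sigma\<^sup>2 + 2 * tau\<^sup>2 * (c - 1)\<^sup>2 / c\<^sup>2"
      using c by (simp add: field_simps power2_eq_square)
    finally show ?thesis .
  qed
  have "scaled_chi2 M (\<lambda>\<omega>. (norm (\<Sum>v\<in>V. a v *\<^sub>R X v \<omega>))\<^sup>2) (\<Sum>v\<in>V. (a v * s v)\<^sup>2) CARD('d)"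
  proof (rule scaled_chi2_norm_sq_lincomb)
    show "finite V" "V \<noteq> {}"
      using \<open>finite C\<close> by (auto simp: V_def)
    have "V \<times> UNIV \<subseteq> (Inl ` {1,2} \<union> Inr ` {1..n}) \<times> UNIV"
      using C labels by (auto simp: V_def)
    then show "indep_vars (\<lambda>_. borel) (\<lambda>(v, c) \<omega>. X v \<omega> $ c) (V \<times> UNIV)"
      using indep unfolding X_def by (rule indep_vars_subset[rotated])
    fix v assume "v \<in> V"
    then show "distributed M lborel (\<lambda>\<omega>. X v \<omega> $ c') (normal_density 0 (s v))" for c'
      using mu_gauss xi_gauss C labels by (auto simp: V_def X_def s_def)
    show "s v > 0"
      using \<open>tau > 0\<close> \<open>sigma > 0\<close> by (simp add: s_def split: sum.split)
    show "a v \<noteq> 0"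
      using c by (simp add: a_def split: sum.split)
  qed
  then show ?thesis
    unfolding residual variance .
qed


lemma (in prob_space) scaled_chi2_residual_min_purity:
  fixes mu xi :: "nat \<Rightarrow> 'a \<Rightarrow> real ^ 'd" and z :: "nat \<Rightarrow> nat" and tau sigma :: real
  assumes "tau > 0" "sigma > 0"
    and mu_gauss: "\<And>m c. m \<in> {1,2} \<Longrightarrow> distributed M lborel (\<lambda>\<omega>. mu m \<omega> $ c) (normal_density 0 tau)"
    and xi_gauss: "\<And>k c. k \<in> {1..n} \<Longrightarrow> distributed M lborel (\<lambda>\<omega>. xi k \<omega> $ c) (normal_density 0 sigma)"
    and indep: "indep_vars (\<lambda>_. borel)
                  (\<lambda>(v, c) \<omega>. (case v of Inl m \<Rightarrow> mu m \<omega> | Inr k \<Rightarrow> xi k \<omega>) $ c)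
                  ((Inl ` {1,2} \<union> Inr ` {1..n}) \<times> (UNIV :: 'd set))"
    and C: "C \<subseteq> {1..n}" "i \<in> C"
    and labels: "\<And>k. k \<in> {1..n} \<Longrightarrow> z k \<in> {1,2}"
    and purity: "card (C \<inter> {k \<in> {1..n}. z k = z i}) = 1"
  defines "c \<equiv> real (card C)"
  shows "scaled_chi2 M
     (\<lambda>\<omega>. (norm (mu (z i) \<omega> + xi i \<omega> - (1 / c) *\<^sub>R (\<Sum>k\<in>C. mu (z k) \<omega> + xi k \<omega>)))\<^sup>2)
     ((1 - 1 / c) * sigma\<^sup>2 + 2 * tau\<^sup>2 * (c - 1)\<^sup>2 / c\<^sup>2) CARD('d)"
proof (cases "card C = 1")
  case True
  then have "C = {i}"
    using C(2) by (auto simp: card_1_singleton_iff)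
  then show ?thesis
    by (simp add: c_def scaled_chi2_zero)
next
  case False
  have "finite C"
    using C(1) finite_subset by blast
  then have "card C > 0"
    using C(2) card_gt_0_iff by blast
  with False have "card C \<ge> 2"
    by linarith
  have "i \<in> C \<inter> {k \<in> {1..n}. z k = z i}"
    using C by auto
  with purity have lone: "C \<inter> {k \<in> {1..n}. z k = z i} = {i}"
    by (metis card_1_singletonE singletonD)
  have "z k = 3 - z i" if "k \<in> C - {i}" for k
  proof -
    have "k \<in> {1..n}" "i \<in> {1..n}"
      using that C by auto
    moreover have "z k \<noteq> z i"
      using that C(1) lone by blast
    ultimately show ?thesis
      using labels[of k] labels[of i] by auto
  qed
  moreover have "z i \<in> {1,2}"
    using C labels by blast
  then have "z i \<in> {1,2}" "3 - z i \<in> {1,2}" "z i \<noteq> 3 - z i"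
    by auto
  ultimately show ?thesis
    unfolding c_def
    by (intro scaled_chi2_residual_of_lone_point[OF assms(1-5) C \<open>card C \<ge> 2\<close>]) simp_all
qed

lemma one_minus_divide_sq_le:
  fixes m c :: nat
  assumes "1 \<le> m" "m \<le> c"
  shows "(1 - real m / real c)\<^sup>2 \<le> (1 - 1 / real c)\<^sup>2"
proof (rule power_mono)
  show "1 - real m / real c \<le> 1 - 1 / real c" "0 \<le> 1 - real m / real c"
    using assms by (simp_all add: divide_right_mono divide_le_eq_1)
qed

theorem lemmaC2:
  fixes M :: "'a measure"
    and mu :: "nat \<Rightarrow> 'a \<Rightarrow> real ^ 'd"
    and xi :: "nat \<Rightarrow> 'a \<Rightarrow> real ^ 'd"
    and n :: nat and tau sigma :: real
    and z :: "nat \<Rightarrow> nat" and C :: "nat \<Rightarrow> nat set"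
    and i j l :: nat
  assumes "prob_space M"
    and "n \<ge> 2" and "tau > 0" and "sigma > 0"
    and mu_gauss: "\<And>m c. m \<in> {1,2} \<Longrightarrow>
                  distributed M lborel (\<lambda>\<omega>. mu m \<omega> $ c) (normal_density 0 tau)"
    and xi_gauss: "\<And>k c. k \<in> {1..n} \<Longrightarrow>
                  distributed M lborel (\<lambda>\<omega>. xi k \<omega> $ c) (normal_density 0 sigma)"
    and indep: "prob_space.indep_vars M (\<lambda>_. borel)
                  (\<lambda>(v, c) \<omega>. (case v of Inl m \<Rightarrow> mu m \<omega> | Inr k \<Rightarrow> xi k \<omega>) $ c)
                  ((Inl ` {1,2} \<union> Inr ` {1..n}) \<times> (UNIV :: 'd set))"
    and labels: "\<And>k. k \<in> {1..n} \<Longrightarrow> z k \<in> {1,2}"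
    and S1: "{k \<in> {1..n}. z k = 1} \<noteq> {}" and S2: "{k \<in> {1..n}. z k = 2} \<noteq> {}"
    and part: "C 1 \<union> C 2 = {1..n}" "C 1 \<inter> C 2 = {}" "C 1 \<noteq> {}" "C 2 \<noteq> {}"
    and "j \<in> {1,2}" and "l \<in> {1,2}"
    and "i \<in> C j" and "z i = l"
  shows
    "let c = card (C j);
         S = {k \<in> {1..n}. z k = l};
         R = real (card (C j \<inter> S)) / real c;
         alpha = (\<lambda>r::real. 2 * tau\<^sup>2 * (1 - r)\<^sup>2 + (1 - 1 / real c) * sigma\<^sup>2);
         A = (1 - 1 / real c) * sigma\<^sup>2 + 2 * tau\<^sup>2 * (real c - 1)\<^sup>2 / (real c)\<^sup>2;
         x = (\<lambda>k \<omega>. mu (z k) \<omega> + xi k \<omega>);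
         muhat = (\<lambda>\<omega>. (1 / real c) *\<^sub>R (\<Sum>k\<in>C j. x k \<omega>))
     in (\<forall>m \<in> {1..c}. alpha (real m / real c) \<le> alpha (1 / real c))
        \<and> alpha (1 / real c) = A
        \<and> alpha R \<le> A
        \<and> (R = 1 / real c \<longrightarrow>
             scaled_chi2 M (\<lambda>\<omega>. (norm (x i \<omega> - muhat \<omega>))\<^sup>2) A CARD('d))"
proof -
  interpret prob_space M by fact
  define c where "c = card (C j)"
  define S where "S = {k \<in> {1..n}. z k = l}"
  define alpha where "alpha r = 2 * tau\<^sup>2 * (1 - r)\<^sup>2 + (1 - 1 / real c) * sigma\<^sup>2" for r :: real
  define A where "A = (1 - 1 / real c) * sigma\<^sup>2 + 2 * tau\<^sup>2 * (real c - 1)\<^sup>2 / (real c)\<^sup>2"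
  have "C j \<subseteq> {1..n}"
    using part(1) \<open>j \<in> {1,2}\<close> by auto
  then have "i \<in> C j \<inter> S" "finite (C j)"
    using \<open>i \<in> C j\<close> \<open>z i = l\<close> finite_subset by (auto simp: S_def)
  then have purity: "1 \<le> card (C j \<inter> S)" "card (C j \<inter> S) \<le> c"
    by (auto simp: c_def Suc_le_eq card_gt_0_iff intro: card_mono)
  have alpha_le: "alpha (real m / real c) \<le> alpha (1 / real c)" if "1 \<le> m" "m \<le> c" for m
    using one_minus_divide_sq_le[OF that] by (simp add: alpha_def mult_left_mono)
  have alpha_min: "alpha (1 / real c) = A"
    using purity by (simp add: alpha_def A_def field_simps power2_eq_square)
  have chi2: "scaled_chi2 M (\<lambda>\<omega>. (norm (mu (z i) \<omega> + xi i \<omega>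
        - (1 / real c) *\<^sub>R (\<Sum>k\<in>C j. mu (z k) \<omega> + xi k \<omega>)))\<^sup>2) A CARD('d)"
    if "real (card (C j \<inter> S)) / real c = 1 / real c"
  proof (rule scaled_chi2_residual_min_purity[where z=z and C="C j" and i=i and n=n,
        OF assms(3,4) mu_gauss xi_gauss indep \<open>C j \<subseteq> {1..n}\<close> \<open>i \<in> C j\<close> labels,
        folded c_def, folded A_def])
    show "card (C j \<inter> {k \<in> {1..n}. z k = z i}) = 1"
      using that purity \<open>z i = l\<close> by (simp add: S_def)
  qed
  show ?thesis
    using alpha_le alpha_min alpha_le[OF purity] chi2
    unfolding Let_def c_def[symmetric] S_def[symmetric] alpha_def[symmetric] A_def[symmetric]
    by simp
qed

end
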